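(* Let $(\Omega,\mu)$ be a measure space, $E\subset\Omega$ with $0<\mu E<\infty$, and let $(v_k)_{k\ge1}$ be a sequence in $L^2_{\mathbb R}(\Omega,\mu)$ with $\sum_{k\ge1}|v_k(x)|^2\le M^2$ for all $x\in E$, for some constant $M$. Let $(u_k)_{k\ge1}$ be a frame in $L^2_{\mathbb R}(\Omega,\mu)$. Then the operator $Uf=\sum_{k\ge1}(f,v_k)u_k$, acting $L^2(E,\mu)\to L^2_{\mathbb R}(\Omega,\mu)$, its adjoint $U^*f=\sum_{k\ge1}(f,u_k)v_k$, and the operator $U'f=\sum_{k\ge1}(f,v_k)v_k|_E$, acting $L^2(E,\mu)\to L^2_{\mathbb R}(E,\mu)$, are all compact.
   Context: A sequence $(u_k)_{k\ge1}$ in $L^2_{\mathbb R}(\Omega,\mu)$ is a frame if there exist constants $A>0$, $B>0$ with $A\|f\|^2\le\sum_{k\ge1}|(f,u_k)|^2\le B\|f\|^2$ for all $f$. Functions in $L^2(E,\mu)$ are regarded as functions on $\Omega$ vanishing outside $E$, and $(f,g)=\int fg\,d\mu$. *)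

theory Defs
  imports "HOL-Analysis.Analysis"
begin

text \<open>Real L2 space of a measure space (functions as representatives).\<close>
definition L2 :: "'a measure \<Rightarrow> ('a \<Rightarrow> real) set" where
  "L2 M = {f. f \<in> borel_measurable M \<and> integrable M (\<lambda>x. (f x)^2)}"

text \<open>L2(E): square-integrable functions on Omega vanishing outside E.\<close>
definition L2_on :: "'a measure \<Rightarrow> 'a set \<Rightarrow> ('a \<Rightarrow> real) set" where
  "L2_on M E = {f \<in> L2 M. \<forall>x\<in>space M - E. f x = 0}"

definition L2_inner :: "'a measure \<Rightarrow> ('a \<Rightarrow> real) \<Rightarrow> ('a \<Rightarrow> real) \<Rightarrow> real" where
  "L2_inner M f g = (\<integral>x. f x * g x \<partial>M)"

definition L2_norm :: "'a measure \<Rightarrow> ('a \<Rightarrow> real) \<Rightarrow> real" where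
  "L2_norm M f = sqrt (\<integral>x. (f x)^2 \<partial>M)"

definition is_frame :: "'a measure \<Rightarrow> (nat \<Rightarrow> 'a \<Rightarrow> real) \<Rightarrow> bool" where
  "is_frame M u \<longleftrightarrow> (\<forall>k. u k \<in> L2 M) \<and>
     (\<exists>A>0. \<exists>B>0. \<forall>f\<in>L2 M. summable (\<lambda>k. (L2_inner M f (u k))^2) \<and>
        A * (L2_norm M f)^2 \<le> (\<Sum>k. (L2_inner M f (u k))^2) \<and>
        (\<Sum>k. (L2_inner M f (u k))^2) \<le> B * (L2_norm M f)^2)"

definition L2_series_conv ::
  "'a measure \<Rightarrow> (nat \<Rightarrow> real) \<Rightarrow> (nat \<Rightarrow> 'a \<Rightarrow> real) \<Rightarrow> ('a \<Rightarrow> real) \<Rightarrow> bool" where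
  "L2_series_conv M c g h \<longleftrightarrow> h \<in> L2 M \<and>
     (\<lambda>n. L2_norm M (\<lambda>x. (\<Sum>k<n. c k * g k x) - h x)) \<longlonglongrightarrow> 0"

text \<open>The operator f \<mapsto> sum_k (c f)_k g_k is well defined from D into Tgt (series converging
  in L2) and compact: images of norm-bounded sequences have L2-convergent subsequences.\<close>
definition compact_series_op ::
  "'a measure \<Rightarrow> ('a \<Rightarrow> real) set \<Rightarrow> ('a \<Rightarrow> real) set \<Rightarrow>
   (('a \<Rightarrow> real) \<Rightarrow> nat \<Rightarrow> real) \<Rightarrow> (nat \<Rightarrow> 'a \<Rightarrow> real) \<Rightarrow> bool" where
  "compact_series_op M D Tgt c g \<longleftrightarrow>
     (\<exists>T. (\<forall>f\<in>D. T f \<in> Tgt \<and> L2_series_conv M (c f) g (T f)) \<and>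
          (\<forall>(F::nat \<Rightarrow> 'a \<Rightarrow> real) (B::real). (\<forall>n. F n \<in> D \<and> L2_norm M (F n) \<le> B) \<longrightarrow>
             (\<exists>r l. strict_mono r \<and> l \<in> Tgt \<and>
                (\<lambda>n. L2_norm M (\<lambda>x. T (F (r n)) x - l x)) \<longlonglongrightarrow> 0)))"

end

theory Submission
  imports Defs
begin

text \<open>
  Put \<open>w\<^sub>k = 1\<^sub>E v\<^sub>k\<close>. Integrating the pointwise bound \<open>\<Sum>\<^sub>k v\<^sub>k(x)\<^sup>2 \<le> C\<^sup>2\<close> over \<open>E\<close> gives
  \<open>\<Sum>\<^sub>k \<parallel>w\<^sub>k\<parallel>\<^sup>2 \<le> C\<^sup>2 \<mu>(E) < \<infinity>\<close>: the \<open>w\<^sub>k\<close> form a Hilbert-Schmidt family. By Cauchy-Schwarz the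
  coefficients \<open>(f, v\<^sub>k) = (f, w\<^sub>k)\<close> of \<open>f \<in> L\<^sup>2(E)\<close> then have uniformly small tails,
  \<open>\<Sum>\<^bsub>k\<ge>N\<^esub> (f, w\<^sub>k)\<^sup>2 \<le> \<parallel>f\<parallel>\<^sup>2 \<Sum>\<^bsub>k\<ge>N\<^esub> \<parallel>w\<^sub>k\<parallel>\<^sup>2\<close>, and so do the series \<open>\<Sum>\<^bsub>k\<ge>N\<^esub> c\<^sub>k w\<^sub>k\<close> for bounded
  \<open>\<ell>\<^sup>2\<close> coefficients. Frames and the \<open>w\<^sub>k\<close> themselves are Bessel sequences, so in each of the three
  operators the tails of the defining series are uniformly small on bounded sets, while the finitely
  many leading coefficients stay in a compact set. Along a subsequence on which every coefficient
  converges the images are therefore Cauchy, and completeness of \<open>L\<^sup>2\<close> provides the limit.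
\<close>

section \<open>Square-integrable functions\<close>

lemma L2_D [measurable_dest]: "f \<in> L2 M \<Longrightarrow> f \<in> borel_measurable M"
  by (simp add: L2_def)

lemma L2_sq_integrable: "f \<in> L2 M \<Longrightarrow> integrable M (\<lambda>x. (f x)^2)"
  by (simp add: L2_def)

lemma L2_I: "f \<in> borel_measurable M \<Longrightarrow> integrable M (\<lambda>x. (f x)^2) \<Longrightarrow> f \<in> L2 M"
  by (simp add: L2_def)

lemma L2_mult_integrable:
  assumes "f \<in> L2 M" "g \<in> L2 M"
  shows "integrable M (\<lambda>x. f x * g x)"
proof (rule Bochner_Integration.integrable_bound)
  show "integrable M (\<lambda>x. (f x)^2 + (g x)^2)"
    using assms by (simp add: L2_sq_integrable)
  have "2 * \<bar>f x * g x\<bar> \<le> (f x)^2 + (g x)^2" for x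
    using sum_squares_bound[of "\<bar>f x\<bar>" "\<bar>g x\<bar>"] by (simp add: abs_mult)
  then show "AE x in M. norm (f x * g x) \<le> norm ((f x)^2 + (g x)^2)"
    by (intro AE_I2) (smt (verit) abs_ge_zero real_norm_def)
qed (use assms in measurable)

lemma L2_add:
  assumes "f \<in> L2 M" "g \<in> L2 M"
  shows "(\<lambda>x. f x + g x) \<in> L2 M"
proof (rule L2_I)
  have "integrable M (\<lambda>x. (f x)^2 + (g x)^2 + 2 * (f x * g x))"
    using assms by (simp add: L2_sq_integrable L2_mult_integrable)
  then show "integrable M (\<lambda>x. (f x + g x)^2)"
    by (simp add: power2_sum mult.assoc)
qed (use assms in measurable)

lemma L2_cmult: "f \<in> L2 M \<Longrightarrow> (\<lambda>x. c * f x) \<in> L2 M"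
  by (rule L2_I) (auto simp: power_mult_distrib L2_sq_integrable)

lemma L2_diff: "f \<in> L2 M \<Longrightarrow> g \<in> L2 M \<Longrightarrow> (\<lambda>x. f x - g x) \<in> L2 M"
  using L2_add[of f M "\<lambda>x. (-1) * g x"] L2_cmult[of g M "-1"] by simp

lemma L2_zero: "(\<lambda>x. 0) \<in> L2 M"
  by (simp add: L2_def)

lemma L2_sum: "(\<And>i. i \<in> I \<Longrightarrow> f i \<in> L2 M) \<Longrightarrow> (\<lambda>x. \<Sum>i\<in>I. f i x) \<in> L2 M"
  by (induction I rule: infinite_finite_induct) (simp_all add: L2_zero L2_add)

lemma L2_indicator_mult:
  assumes "f \<in> L2 M" "E \<in> sets M"
  shows "(\<lambda>x. indicator E x * f x) \<in> L2 M"
proof (rule L2_I)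
  have "(indicator E x * f x)^2 = indicator E x * (f x)^2" for x :: 'a
    by (simp add: indicator_def)
  then show "integrable M (\<lambda>x. (indicator E x * f x)^2)"
    using integrable_real_mult_indicator[OF assms(2) L2_sq_integrable[OF assms(1)]]
    by (simp add: mult.commute)
qed (use assms in measurable)

lemma L2_norm_nonneg: "0 \<le> L2_norm M f"
  by (simp add: L2_norm_def)

lemma L2_norm_sq: "(L2_norm M f)^2 = (\<integral>x. (f x)^2 \<partial>M)"
  by (simp add: L2_norm_def)

lemma L2_norm_le: "(\<integral>x. (f x)^2 \<partial>M) \<le> c^2 \<Longrightarrow> 0 \<le> c \<Longrightarrow> L2_norm M f \<le> c"
  by (simp add: L2_norm_def real_le_lsqrt)

lemma L2_norm_cmult: "L2_norm M (\<lambda>x. c * f x) = \<bar>c\<bar> * L2_norm M f"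
  by (simp add: L2_norm_def power_mult_distrib real_sqrt_mult)

lemma L2_norm_minus_commute: "L2_norm M (\<lambda>x. f x - g x) = L2_norm M (\<lambda>x. g x - f x)"
  by (simp add: L2_norm_def power2_commute)

lemma L2_inner_commute: "L2_inner M f g = L2_inner M g f"
  by (simp add: L2_inner_def mult.commute)

lemma L2_inner_self: "L2_inner M f f = (L2_norm M f)^2"
  by (simp add: L2_inner_def L2_norm_sq power2_eq_square[symmetric])

lemma L2_inner_cmult: "L2_inner M (\<lambda>x. c * f x) g = c * L2_inner M f g"
  by (simp add: L2_inner_def mult.assoc)

lemma L2_inner_diff:
  assumes "f \<in> L2 M" "g \<in> L2 M" "h \<in> L2 M"
  shows "L2_inner M (\<lambda>x. f x - g x) h = L2_inner M f h - L2_inner M g h"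
  unfolding L2_inner_def left_diff_distrib
  using assms by (intro Bochner_Integration.integral_diff L2_mult_integrable)

lemma L2_inner_sum:
  assumes "\<And>i. i \<in> I \<Longrightarrow> f i \<in> L2 M" "g \<in> L2 M"
  shows "L2_inner M (\<lambda>x. \<Sum>i\<in>I. f i x) g = (\<Sum>i\<in>I. L2_inner M (f i) g)"
  unfolding L2_inner_def sum_distrib_right
  using assms by (intro Bochner_Integration.integral_sum L2_mult_integrable)

lemma nn_integral_sq_eq_L2_norm:
  "f \<in> L2 M \<Longrightarrow> (\<integral>\<^sup>+x. ennreal ((f x)^2) \<partial>M) = ennreal ((L2_norm M f)^2)"
  by (simp add: L2_norm_sq nn_integral_eq_integral L2_sq_integrable)

lemma L2_inner_abs_le:
  assumes f: "f \<in> L2 M" and g: "g \<in> L2 M"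
  shows "\<bar>L2_inner M f g\<bar> \<le> L2_norm M f * L2_norm M g"
proof -
  have [measurable]: "f \<in> borel_measurable M" "g \<in> borel_measurable M"
    using f g by (simp_all add: L2_D)
  have fg: "integrable M (\<lambda>x. \<bar>f x * g x\<bar>)"
    using L2_mult_integrable[OF f g] by simp
  have "(\<integral>\<^sup>+x. ennreal \<bar>f x\<bar> * ennreal \<bar>g x\<bar> \<partial>M) = (\<integral>\<^sup>+x. ennreal \<bar>f x * g x\<bar> \<partial>M)"
    by (simp add: abs_mult ennreal_mult)
  also have "\<dots> = ennreal (\<integral>x. \<bar>f x * g x\<bar> \<partial>M)"
    using fg by (intro nn_integral_eq_integral) auto
  finally have "ennreal ((\<integral>x. \<bar>f x * g x\<bar> \<partial>M)^2) = (\<integral>\<^sup>+x. ennreal \<bar>f x\<bar> * ennreal \<bar>g x\<bar> \<partial>M)^2"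
    by (simp add: ennreal_power)
  also have "\<dots> \<le> (\<integral>\<^sup>+x. (ennreal \<bar>f x\<bar>)^2 \<partial>M) * (\<integral>\<^sup>+x. (ennreal \<bar>g x\<bar>)^2 \<partial>M)"
    by (intro Cauchy_Schwarz_nn_integral) measurable
  also have "\<dots> = ennreal ((L2_norm M f * L2_norm M g)^2)"
    using nn_integral_sq_eq_L2_norm[OF f] nn_integral_sq_eq_L2_norm[OF g]
    by (simp add: ennreal_power ennreal_mult power_mult_distrib)
  finally have "(\<integral>x. \<bar>f x * g x\<bar> \<partial>M)^2 \<le> (L2_norm M f * L2_norm M g)^2"
    by simp
  then have "(\<integral>x. \<bar>f x * g x\<bar> \<partial>M) \<le> L2_norm M f * L2_norm M g"
    by (rule power2_le_imp_le) (simp add: L2_norm_nonneg)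
  then show ?thesis
    unfolding L2_inner_def by (rule order_trans[OF integral_abs_bound])
qed

lemma L2_inner_sq_le:
  "f \<in> L2 M \<Longrightarrow> g \<in> L2 M \<Longrightarrow> (L2_inner M f g)^2 \<le> (L2_norm M f)^2 * (L2_norm M g)^2"
  using L2_inner_abs_le[of f M g] abs_le_square_iff[of "L2_inner M f g" "L2_norm M f * L2_norm M g"]
  by (simp add: power_mult_distrib L2_norm_nonneg)

lemma L2_norm_add_le:
  assumes f: "f \<in> L2 M" and g: "g \<in> L2 M"
  shows "L2_norm M (\<lambda>x. f x + g x) \<le> L2_norm M f + L2_norm M g"
proof (rule L2_norm_le)
  have "(\<integral>x. (f x + g x)^2 \<partial>M) = (L2_norm M f)^2 + 2 * L2_inner M f g + (L2_norm M g)^2"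
    using f g by (simp add: power2_sum L2_norm_sq L2_inner_def L2_sq_integrable
        L2_mult_integrable mult.assoc)
  also have "\<dots> \<le> (L2_norm M f + L2_norm M g)^2"
    using L2_inner_abs_le[OF f g] by (simp add: power2_sum)
  finally show "(\<integral>x. (f x + g x)^2 \<partial>M) \<le> (L2_norm M f + L2_norm M g)^2" .
qed (simp add: L2_norm_nonneg)

lemma L2_norm_diff_le:
  assumes "f \<in> L2 M" "g \<in> L2 M"
  shows "L2_norm M (\<lambda>x. f x - g x) \<le> L2_norm M f + L2_norm M g"
proof -
  have "L2_norm M (\<lambda>x. f x + (-1) * g x) \<le> L2_norm M f + L2_norm M (\<lambda>x. (-1) * g x)"
    using assms by (intro L2_norm_add_le L2_cmult)
  then show ?thesis
    unfolding L2_norm_cmult by simp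
qed

section \<open>Completeness of \<open>L\<^sup>2\<close>\<close>

definition L2_Cauchy :: "'a measure \<Rightarrow> (nat \<Rightarrow> 'a \<Rightarrow> real) \<Rightarrow> bool" where
  "L2_Cauchy M s \<longleftrightarrow> (\<forall>e>0. \<exists>N. \<forall>m\<ge>N. \<forall>n\<ge>N. L2_norm M (\<lambda>x. s m x - s n x) < e)"

definition L2_converges_to :: "'a measure \<Rightarrow> (nat \<Rightarrow> 'a \<Rightarrow> real) \<Rightarrow> ('a \<Rightarrow> real) \<Rightarrow> bool" where
  "L2_converges_to M s l \<longleftrightarrow> l \<in> L2 M \<and> (\<lambda>n. L2_norm M (\<lambda>x. s n x - l x)) \<longlonglongrightarrow> 0"

lemma L2_series_conv_iff:
  "L2_series_conv M c g h \<longleftrightarrow> L2_converges_to M (\<lambda>n x. \<Sum>k<n. c k * g k x) h"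
  by (simp add: L2_series_conv_def L2_converges_to_def)

lemma two_abs_le_weighted_sq:
  fixes a t :: real
  assumes t: "0 < t"
  shows "2 * \<bar>a\<bar> \<le> t * a^2 + 1/t"
proof -
  have "0 \<le> (t * \<bar>a\<bar> - 1)^2"
    by simp
  also have "\<dots> = t * (t * a^2 + 1/t) - t * (2 * \<bar>a\<bar>)"
    using t by (cases "a \<ge> 0") (simp_all add: power2_eq_square field_simps)
  finally show ?thesis
    using t by simp
qed

lemma L2_fast_increments_AE_convergent:
  assumes s: "\<And>n. s n \<in> L2 M"
    and fast: "\<And>n. L2_norm M (\<lambda>x. s (Suc n) x - s n x) \<le> (1/4)^n"
  shows "AE x in M. convergent (\<lambda>n. s n x)"
proof -
  define d where "d n = (\<lambda>x. s (Suc n) x - s n x)" for n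
  have d: "d n \<in> L2 M" for n
    unfolding d_def by (intro L2_diff s)
  have [measurable]: "d n \<in> borel_measurable M" for n
    using d by (rule L2_D)
  have int_le: "(\<integral>\<^sup>+x. ennreal (2^n * (d n x)^2) \<partial>M) \<le> ennreal ((1/8)^n)" for n
  proof -
    have "(\<integral>\<^sup>+x. ennreal (2^n * (d n x)^2) \<partial>M) = ennreal (2^n * (L2_norm M (d n))^2)"
      using nn_integral_sq_eq_L2_norm[OF d] by (simp add: ennreal_mult nn_integral_cmult)
    also have "2^n * (L2_norm M (d n))^2 \<le> 2^n * ((1/4)^n)^2"
      using fast[of n] by (intro mult_left_mono power_mono L2_norm_nonneg) (simp_all add: d_def)
    also have "(2::real)^n * ((1/4)^n)^2 = (1/8)^n"
      by (simp add: power2_eq_square power_mult_distrib[symmetric])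
    finally show ?thesis
      by (simp add: ennreal_leI)
  qed
  \<comment> \<open>The weights \<open>2^n\<close> make the pointwise series of increments dominated by a function
    that is finite almost everywhere.\<close>
  have "(\<integral>\<^sup>+x. (\<Sum>n. ennreal (2^n * (d n x)^2)) \<partial>M) = (\<Sum>n. \<integral>\<^sup>+x. ennreal (2^n * (d n x)^2) \<partial>M)"
    by (intro nn_integral_suminf) measurable
  also have "\<dots> \<le> (\<Sum>n. ennreal ((1/8)^n))"
    by (intro suminf_le int_le) auto
  also have "\<dots> = ennreal (\<Sum>n. (1/8::real)^n)"
    by (intro suminf_ennreal2) auto
  also have "\<dots> < \<infinity>"
    by simp
  finally have "(\<integral>\<^sup>+x. (\<Sum>n. ennreal (2^n * (d n x)^2)) \<partial>M) < \<infinity>" .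
  then have "AE x in M. (\<Sum>n. ennreal (2^n * (d n x)^2)) < \<infinity>"
    by (intro finite_nn_integral_imp_ae_finite) measurable
  moreover have "convergent (\<lambda>n. s n x)" if fin: "(\<Sum>n. ennreal (2^n * (d n x)^2)) < \<infinity>" for x
  proof -
    have "summable (\<lambda>n. 2^n * (d n x)^2)"
      using fin by (intro summable_suminf_not_top) auto
    then have "summable (\<lambda>n. (2^n * (d n x)^2 + (1/2)^n) / 2)"
      by (intro summable_divide summable_add summable_geometric) simp_all
    moreover have "norm (d n x) \<le> (2^n * (d n x)^2 + (1/2)^n) / 2" for n
      using two_abs_le_weighted_sq[of "2^n" "d n x"] by (simp add: power_one_over)
    ultimately have "summable (\<lambda>n. d n x)"
      by (rule summable_comparison_test'[where N=0])
    then have "convergent (\<lambda>n. \<Sum>j<n. d j x)"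
      by (simp add: summable_iff_convergent)
    moreover have "(\<Sum>j<n. d j x) = s n x - s 0 x" for n
      unfolding d_def using sum_lessThan_telescope[of "\<lambda>j. s j x"] by simp
    ultimately have "convergent (\<lambda>n. (s n x - s 0 x) + s 0 x)"
      by (intro convergent_add convergent_const) simp_all
    then show ?thesis
      by simp
  qed
  ultimately show ?thesis
    by auto
qed

lemma L2_Cauchy_AE_subseq_limit:
  assumes s: "\<And>n. s n \<in> L2 M" and Cauchy: "L2_Cauchy M s" and r: "strict_mono r"
    and h [measurable]: "h \<in> borel_measurable M"
    and lim: "AE x in M. (\<lambda>j. s (r j) x) \<longlonglongrightarrow> h x"
  shows "L2_converges_to M s h"
proof -
  have [measurable]: "s n \<in> borel_measurable M" for n
    using s by (rule L2_D)
  have close: "(\<lambda>x. s n x - h x) \<in> L2 M \<and> (\<integral>x. (s n x - h x)^2 \<partial>M) \<le> e^2"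
    if N: "\<forall>m\<ge>N. \<forall>n\<ge>N. L2_norm M (\<lambda>x. s m x - s n x) < e" and n: "N \<le> n" for e N n
  proof -
    have "(\<integral>\<^sup>+x. ennreal ((s n x - h x)^2) \<partial>M)
        = (\<integral>\<^sup>+x. liminf (\<lambda>j. ennreal ((s n x - s (r j) x)^2)) \<partial>M)"
    proof (rule nn_integral_cong_AE)
      show "AE x in M. ennreal ((s n x - h x)^2) = liminf (\<lambda>j. ennreal ((s n x - s (r j) x)^2))"
        using lim
      proof eventually_elim
        case (elim x)
        have "(\<lambda>j. ennreal ((s n x - s (r j) x)^2)) \<longlonglongrightarrow> ennreal ((s n x - h x)^2)"
          by (intro tendsto_ennrealI tendsto_intros elim)
        from lim_imp_Liminf[OF trivial_limit_sequentially this] show ?case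
          by simp
      qed
    qed
    also have "\<dots> \<le> liminf (\<lambda>j. \<integral>\<^sup>+x. ennreal ((s n x - s (r j) x)^2) \<partial>M)"
      by (intro nn_integral_liminf) measurable
    also have "\<dots> \<le> ennreal (e^2)"
    proof (rule Liminf_le)
      have "(\<integral>\<^sup>+x. ennreal ((s n x - s (r j) x)^2) \<partial>M) \<le> ennreal (e^2)" if "N \<le> j" for j
      proof -
        have "N \<le> r j"
          using seq_suble[OF r, of j] that by simp
        then have "L2_norm M (\<lambda>x. s n x - s (r j) x) < e"
          using N n by blast
        then show ?thesis
          using s by (simp add: nn_integral_sq_eq_L2_norm L2_diff power_mono L2_norm_nonneg)
      qed
      then show "\<forall>\<^sub>F j in sequentially. (\<integral>\<^sup>+x. ennreal ((s n x - s (r j) x)^2) \<partial>M) \<le> ennreal (e^2)"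
        by (auto simp: eventually_sequentially)
    qed simp
    finally have le: "(\<integral>\<^sup>+x. ennreal ((s n x - h x)^2) \<partial>M) \<le> ennreal (e^2)" .
    then have int: "integrable M (\<lambda>x. (s n x - h x)^2)"
      by (intro integrableI_bounded) (auto simp: top.not_eq_extremum intro: le_less_trans)
    then show ?thesis
      using le by (simp add: L2_def nn_integral_eq_integral)
  qed
  obtain N1 where N1: "\<forall>m\<ge>N1. \<forall>n\<ge>N1. L2_norm M (\<lambda>x. s m x - s n x) < 1"
    using Cauchy zero_less_one unfolding L2_Cauchy_def by blast
  have "h \<in> L2 M"
    using L2_diff[OF s[of N1] conjunct1[OF close[OF N1 order_refl]]] by simp
  moreover have "(\<lambda>n. L2_norm M (\<lambda>x. s n x - h x)) \<longlonglongrightarrow> 0"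
  proof (rule LIMSEQ_I)
    fix e :: real assume "0 < e"
    then obtain N where N: "\<forall>m\<ge>N. \<forall>n\<ge>N. L2_norm M (\<lambda>x. s m x - s n x) < e / 2"
      using Cauchy half_gt_zero unfolding L2_Cauchy_def by blast
    have "L2_norm M (\<lambda>x. s n x - h x) \<le> e / 2" if "N \<le> n" for n
      using close[OF N that] \<open>0 < e\<close> by (intro L2_norm_le) auto
    then have "L2_norm M (\<lambda>x. s n x - h x) < e" if "N \<le> n" for n
      using that \<open>0 < e\<close> by fastforce
    then show "\<exists>N. \<forall>n\<ge>N. norm (L2_norm M (\<lambda>x. s n x - h x) - 0) < e"
      by (auto simp: L2_norm_nonneg)
  qed
  ultimately show ?thesis
    by (simp add: L2_converges_to_def)
qed

lemma Cauchy_fast_subseq: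
  fixes D :: "nat \<Rightarrow> nat \<Rightarrow> real"
  assumes "\<And>e. 0 < e \<Longrightarrow> \<exists>N. \<forall>m\<ge>N. \<forall>n\<ge>N. D m n < e" and "\<And>n. 0 < \<epsilon> n"
  obtains r where "strict_mono r" "\<And>n. D (r (Suc n)) (r n) < \<epsilon> n"
proof -
  have "\<exists>r. \<forall>n. (\<forall>i\<ge>r n. \<forall>j\<ge>r n. D i j < \<epsilon> n) \<and> r n < r (Suc n)"
  proof (rule dependent_nat_choice)
    show "\<exists>N. \<forall>i\<ge>N. \<forall>j\<ge>N. D i j < \<epsilon> 0"
      using assms by blast
  next
    fix N n assume "\<forall>i\<ge>N. \<forall>j\<ge>N. D i j < \<epsilon> n"
    obtain N' where "\<forall>i\<ge>N'. \<forall>j\<ge>N'. D i j < \<epsilon> (Suc n)"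
      using assms by blast
    then show "\<exists>N''. (\<forall>i\<ge>N''. \<forall>j\<ge>N''. D i j < \<epsilon> (Suc n)) \<and> N < N''"
      by (intro exI[of _ "max N' (Suc N)"]) auto
  qed
  then obtain r where r: "\<And>n. \<forall>i\<ge>r n. \<forall>j\<ge>r n. D i j < \<epsilon> n"
    and mono: "\<And>n. r n < r (Suc n)"
    by blast
  show ?thesis
  proof (rule that)
    show "strict_mono r"
      using mono by (simp add: strict_mono_Suc_iff)
    show "D (r (Suc n)) (r n) < \<epsilon> n" for n
      using r[of n] mono[of n] by simp
  qed
qed

lemma L2_complete:
  assumes s: "\<And>n. s n \<in> L2 M" and Cauchy: "L2_Cauchy M s"
  obtains l where "L2_converges_to M s l"
proof -
  from Cauchy have "\<And>e. 0 < e \<Longrightarrow> \<exists>N. \<forall>m\<ge>N. \<forall>n\<ge>N. L2_norm M (\<lambda>x. s m x - s n x) < e"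
    by (simp add: L2_Cauchy_def)
  then obtain r where r: "strict_mono r"
    and fast: "\<And>n. L2_norm M (\<lambda>x. s (r (Suc n)) x - s (r n) x) < (1/4)^n"
    by (rule Cauchy_fast_subseq[where \<epsilon>="\<lambda>n. (1/4)^n"]) simp_all
  have "AE x in M. convergent (\<lambda>j. s (r j) x)"
    using s fast by (intro L2_fast_increments_AE_convergent less_imp_le)
  then have "AE x in M. (\<lambda>j. s (r j) x) \<longlonglongrightarrow> lim (\<lambda>j. s (r j) x)"
    by (auto simp: convergent_LIMSEQ_iff)
  moreover have "(\<lambda>x. lim (\<lambda>j. s (r j) x)) \<in> borel_measurable M"
    using s by measurable
  ultimately show ?thesis
    using s Cauchy r by (intro that L2_Cauchy_AE_subseq_limit)
qed

section \<open>Series and Bessel sequences\<close>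

lemma sum_atLeastLessThan_le_suminf_shift:
  fixes a :: "nat \<Rightarrow> real"
  assumes a: "summable a" "\<And>k. 0 \<le> a k"
  shows "(\<Sum>k\<in>{N..<n}. a k) \<le> (\<Sum>k. a (k + N))"
proof (cases "N \<le> n")
  case True
  have "(\<Sum>k\<in>{N..<n}. a k) = (\<Sum>k<n - N. a (k + N))"
    using sum.shift_bounds_nat_ivl[of a 0 N "n - N"] True by (simp add: atLeast0LessThan)
  also have "\<dots> \<le> (\<Sum>k. a (k + N))"
    using a by (intro sum_le_suminf) auto
  finally show ?thesis .
qed (use a in \<open>auto intro: suminf_nonneg\<close>)

lemma L2_converges_to_norm_le:
  assumes lim: "L2_converges_to M s l" and s: "\<And>n. s n \<in> L2 M"
    and bound: "eventually (\<lambda>n. L2_norm M (s n) \<le> R) sequentially"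
  shows "L2_norm M l \<le> R"
proof -
  have l: "l \<in> L2 M" and "(\<lambda>n. L2_norm M (\<lambda>x. s n x - l x)) \<longlonglongrightarrow> 0"
    using lim by (simp_all add: L2_converges_to_def)
  then have "(\<lambda>n. L2_norm M (\<lambda>x. s n x - l x) + R) \<longlonglongrightarrow> 0 + R"
    by (intro tendsto_add) simp_all
  moreover have tri: "L2_norm M l \<le> L2_norm M (\<lambda>x. s n x - l x) + L2_norm M (s n)" for n
    using L2_norm_add_le[OF L2_diff[OF l s[of n]] s[of n]] L2_norm_minus_commute[of M l "s n"]
    by simp
  have "eventually (\<lambda>n. L2_norm M l \<le> L2_norm M (\<lambda>x. s n x - l x) + R) sequentially"
  proof (rule eventually_mono[OF bound])
    show "L2_norm M l \<le> L2_norm M (\<lambda>x. s n x - l x) + R" if "L2_norm M (s n) \<le> R" for n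
      using tri[of n] that by linarith
  qed
  ultimately show ?thesis
    by (intro tendsto_le[OF trivial_limit_sequentially _ tendsto_const]) simp_all
qed

lemma L2_series_conv_diff:
  assumes g: "\<And>k. g k \<in> L2 M"
    and h: "L2_series_conv M c g h" and h': "L2_series_conv M c' g h'"
  shows "L2_series_conv M (\<lambda>k. c k - c' k) g (\<lambda>x. h x - h' x)"
proof -
  define P where "P c n = (\<lambda>x. \<Sum>k<n. c k * g k x)" for c n
  have P: "P c n \<in> L2 M" for c n
    unfolding P_def by (intro L2_sum L2_cmult g)
  have hL2: "h \<in> L2 M" "h' \<in> L2 M"
    using h h' by (simp_all add: L2_series_conv_def)
  have le: "L2_norm M (\<lambda>x. P (\<lambda>k. c k - c' k) n x - (h x - h' x))
      \<le> L2_norm M (\<lambda>x. P c n x - h x) + L2_norm M (\<lambda>x. P c' n x - h' x)" for n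
  proof -
    have "(\<lambda>x. P (\<lambda>k. c k - c' k) n x - (h x - h' x)) = (\<lambda>x. (P c n x - h x) - (P c' n x - h' x))"
      by (simp add: P_def fun_eq_iff left_diff_distrib sum_subtractf)
    then show ?thesis
      using L2_norm_diff_le[OF L2_diff[OF P hL2(1)] L2_diff[OF P hL2(2)]] by simp
  qed
  have lim: "(\<lambda>n. L2_norm M (\<lambda>x. P c n x - h x) + L2_norm M (\<lambda>x. P c' n x - h' x)) \<longlonglongrightarrow> 0 + 0"
    using h h' by (intro tendsto_add) (simp_all add: L2_series_conv_def P_def)
  have "(\<lambda>n. L2_norm M (\<lambda>x. P (\<lambda>k. c k - c' k) n x - (h x - h' x))) \<longlonglongrightarrow> 0 + 0"
    by (rule tendsto_sandwich[OF _ _ tendsto_const lim]) (simp_all add: L2_norm_nonneg le)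
  then show ?thesis
    using hL2 by (simp add: L2_series_conv_def L2_diff P_def)
qed

definition bessel_seq :: "'a measure \<Rightarrow> (nat \<Rightarrow> 'a \<Rightarrow> real) \<Rightarrow> real \<Rightarrow> bool" where
  "bessel_seq M g B \<longleftrightarrow> 0 \<le> B \<and> (\<forall>k. g k \<in> L2 M) \<and>
     (\<forall>f\<in>L2 M. summable (\<lambda>k. (L2_inner M f (g k))^2) \<and>
        (\<Sum>k. (L2_inner M f (g k))^2) \<le> B * (L2_norm M f)^2)"

lemma is_frame_imp_bessel_seq:
  assumes "is_frame M u"
  obtains B where "bessel_seq M u B"
proof -
  obtain A B where "0 < B" "\<forall>k. u k \<in> L2 M"
    "\<forall>f\<in>L2 M. summable (\<lambda>k. (L2_inner M f (u k))^2) \<and>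
        A * (L2_norm M f)^2 \<le> (\<Sum>k. (L2_inner M f (u k))^2) \<and>
        (\<Sum>k. (L2_inner M f (u k))^2) \<le> B * (L2_norm M f)^2"
    using assms unfolding is_frame_def by blast
  then have "bessel_seq M u B"
    by (simp add: bessel_seq_def)
  then show thesis ..
qed

lemma bessel_seq_synthesis_le:
  assumes g: "bessel_seq M g B" and I: "finite I"
  shows "(L2_norm M (\<lambda>x. \<Sum>k\<in>I. c k * g k x))^2 \<le> B * (\<Sum>k\<in>I. (c k)^2)"
proof -
  define h where "h = (\<lambda>x. \<Sum>k\<in>I. c k * g k x)"
  have gk: "g k \<in> L2 M" for k
    using g by (simp add: bessel_seq_def)
  have h: "h \<in> L2 M"
    unfolding h_def by (intro L2_sum L2_cmult gk)
  have B: "0 \<le> B" and bessel: "(\<Sum>k. (L2_inner M h (g k))^2) \<le> B * (L2_norm M h)^2"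
    and summable: "summable (\<lambda>k. (L2_inner M h (g k))^2)"
    using g h by (simp_all add: bessel_seq_def)
  \<comment> \<open>\<open>\<parallel>h\<parallel>\<^sup>2 = \<Sum>\<^sub>k c\<^sub>k (h, g\<^sub>k)\<close>, then Cauchy-Schwarz and the Bessel bound.\<close>
  have "((L2_norm M h)^2)^2 = (\<Sum>k\<in>I. c k * L2_inner M h (g k))^2"
    using L2_inner_sum[of I "\<lambda>k x. c k * g k x" M h] gk h
    by (simp add: L2_inner_self[symmetric] L2_inner_cmult L2_inner_commute L2_cmult h_def)
  also have "\<dots> \<le> (\<Sum>k\<in>I. (c k)^2) * (\<Sum>k\<in>I. (L2_inner M h (g k))^2)"
    by (rule Cauchy_Schwarz_ineq_sum)
  also have "\<dots> \<le> (\<Sum>k\<in>I. (c k)^2) * (B * (L2_norm M h)^2)"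
    using summable I bessel by (intro mult_left_mono sum_nonneg order_trans[OF sum_le_suminf]) auto
  finally have le: "(L2_norm M h)^2 * (L2_norm M h)^2 \<le> (L2_norm M h)^2 * (B * (\<Sum>k\<in>I. (c k)^2))"
    by (simp only: power2_eq_square mult_ac)
  have "(L2_norm M h)^2 \<le> B * (\<Sum>k\<in>I. (c k)^2)"
  proof (cases "L2_norm M h = 0")
    case False
    then have "0 < (L2_norm M h)^2"
      by simp
    then show ?thesis
      using le by (rule mult_le_cancel_left_pos[THEN iffD1])
  qed (use B in \<open>simp add: sum_nonneg\<close>)
  then show ?thesis
    by (simp add: h_def)
qed

lemma L2_Cauchy_if_sq_dist_le:
  assumes le: "\<And>m n. n \<le> m \<Longrightarrow> (L2_norm M (\<lambda>x. s m x - s n x))^2 \<le> \<tau> n"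
    and \<tau>: "\<tau> \<longlonglongrightarrow> 0"
  shows "L2_Cauchy M s"
  unfolding L2_Cauchy_def
proof (intro allI impI)
  fix e :: real assume "0 < e"
  then obtain N where N: "\<And>n. N \<le> n \<Longrightarrow> \<tau> n < e^2"
    using LIMSEQ_D[OF \<tau>, of "e^2"] by (force simp: abs_less_iff)
  have less: "(L2_norm M (\<lambda>x. s m x - s n x))^2 < e^2" if "N \<le> n" "n \<le> m" for m n
    using le[OF that(2)] N[OF that(1)] by linarith
  have "L2_norm M (\<lambda>x. s m x - s n x) < e" if "N \<le> m" "N \<le> n" for m n
  proof -
    have "(L2_norm M (\<lambda>x. s m x - s n x))^2 < e^2"
      using less[of n m] less[of m n] that L2_norm_minus_commute[of M "s m" "s n"]
      by (cases "n \<le> m") auto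
    then show ?thesis
      using \<open>0 < e\<close> by (simp add: power_less_imp_less_base)
  qed
  then show "\<exists>N. \<forall>m\<ge>N. \<forall>n\<ge>N. L2_norm M (\<lambda>x. s m x - s n x) < e"
    by blast
qed

lemma bessel_seq_series_converges:
  assumes g: "bessel_seq M g B" and c: "summable (\<lambda>k. (c k)^2)"
  obtains h where "L2_series_conv M c g h"
proof -
  define P where "P n = (\<lambda>x. \<Sum>k<n. c k * g k x)" for n
  have P: "P n \<in> L2 M" for n
    using g unfolding P_def bessel_seq_def by (intro L2_sum L2_cmult) auto
  define t where "t n = (\<Sum>k. (c (k + n))^2)" for n
  have "t \<longlonglongrightarrow> 0"
    unfolding t_def using c by (rule suminf_exist_split2)
  then have Bt: "(\<lambda>n. B * t n) \<longlonglongrightarrow> 0"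
    by (auto intro: tendsto_mult_right_zero)
  have ordered: "(L2_norm M (\<lambda>x. P m x - P n x))^2 \<le> B * t n" if "n \<le> m" for m n
  proof -
    have "(\<lambda>x. P m x - P n x) = (\<lambda>x. \<Sum>k\<in>{n..<m}. c k * g k x)"
      using that by (simp add: P_def sum_diff_nat_ivl lessThan_atLeast0)
    then have "(L2_norm M (\<lambda>x. P m x - P n x))^2 \<le> B * (\<Sum>k\<in>{n..<m}. (c k)^2)"
      using bessel_seq_synthesis_le[OF g] by simp
    also have "\<dots> \<le> B * t n"
      unfolding t_def using g c
      by (intro mult_left_mono sum_atLeastLessThan_le_suminf_shift) (auto simp: bessel_seq_def)
    finally show ?thesis .
  qed
  have "L2_Cauchy M P"
    using ordered Bt by (rule L2_Cauchy_if_sq_dist_le)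
  with P obtain h where "L2_converges_to M P h"
    by (rule L2_complete)
  then show ?thesis
    by (intro that[of h]) (simp add: L2_series_conv_iff P_def[abs_def])
qed

lemma L2_series_conv_sq_norm_le:
  assumes g: "bessel_seq M g B" and h: "L2_series_conv M d g h"
    and tail: "\<And>n. N \<le> n \<Longrightarrow> (L2_norm M (\<lambda>x. \<Sum>k\<in>{N..<n}. d k * g k x))^2 \<le> t"
  shows "(L2_norm M h)^2 \<le> 2 * B * (\<Sum>k<N. (d k)^2) + 2 * t"
proof -
  define a where "a = B * (\<Sum>k<N. (d k)^2)"
  define P where "P I = (\<lambda>x. \<Sum>k\<in>I. d k * g k x)" for I
  have P: "P I \<in> L2 M" for I
    using g unfolding P_def bessel_seq_def by (intro L2_sum L2_cmult) auto
  have a: "0 \<le> a"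
    using g by (simp add: a_def bessel_seq_def sum_nonneg)
  have t: "0 \<le> t"
    using tail[of N] zero_le_power2 order_trans by blast
  have "L2_norm M (P {..<n}) \<le> sqrt a + sqrt t" if "N \<le> n" for n
  proof -
    have "P {..<n} = (\<lambda>x. P {..<N} x + P {N..<n} x)"
      using that by (simp add: P_def atLeast0LessThan[symmetric] sum.atLeastLessThan_concat)
    then have "L2_norm M (P {..<n}) \<le> L2_norm M (P {..<N}) + L2_norm M (P {N..<n})"
      using L2_norm_add_le[OF P P] by simp
    also have "\<dots> \<le> sqrt a + sqrt t"
      using bessel_seq_synthesis_le[OF g, of "{..<N}" d] tail[OF that]
      by (intro add_mono) (simp_all add: a_def P_def real_le_rsqrt)
    finally show ?thesis .
  qed
  then have "L2_norm M h \<le> sqrt a + sqrt t"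
    using h P unfolding L2_series_conv_iff
    by (intro L2_converges_to_norm_le[of M "\<lambda>n. P {..<n}"]) (auto simp: P_def eventually_sequentially)
  then have "(L2_norm M h)^2 \<le> (sqrt a + sqrt t)^2"
    by (intro power_mono L2_norm_nonneg)
  also have "\<dots> \<le> 2 * a + 2 * t"
    using a t sum_squares_bound[of "sqrt a" "sqrt t"] by (simp add: power2_sum)
  finally show ?thesis
    by (simp add: a_def)
qed

section \<open>Closed subspaces\<close>

text \<open>Elements of \<^const>\<open>L2\<close> are functions rather than classes, so closedness is only
  required up to changing the limit on a null set.\<close>

definition L2_closed_subspace :: "'a measure \<Rightarrow> ('a \<Rightarrow> real) set \<Rightarrow> bool" where
  "L2_closed_subspace M S \<longleftrightarrow> S \<subseteq> L2 M \<and> (\<lambda>x. 0) \<in> S \<and>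
     (\<forall>f\<in>S. \<forall>g\<in>S. \<forall>a. (\<lambda>x. f x + a * g x) \<in> S) \<and>
     (\<forall>s l. (\<forall>n. s n \<in> S) \<and> L2_converges_to M s l \<longrightarrow> (\<exists>l'\<in>S. L2_converges_to M s l'))"

lemma L2_closed_subspace_add_scaled:
  "L2_closed_subspace M S \<Longrightarrow> f \<in> S \<Longrightarrow> g \<in> S \<Longrightarrow> (\<lambda>x. f x + a * g x) \<in> S"
  by (simp add: L2_closed_subspace_def)

lemma L2_closed_subspace_limit:
  assumes "L2_closed_subspace M S" "\<And>n. s n \<in> S" "L2_converges_to M s l"
  obtains l' where "l' \<in> S" "L2_converges_to M s l'"
  using assms unfolding L2_closed_subspace_def by blast

lemma L2_closed_subspace_diff:
  "L2_closed_subspace M S \<Longrightarrow> f \<in> S \<Longrightarrow> g \<in> S \<Longrightarrow> (\<lambda>x. f x - g x) \<in> S"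
  using L2_closed_subspace_add_scaled[of M S f g "-1"] by simp

lemma L2_closed_subspace_sum:
  assumes S: "L2_closed_subspace M S" and g: "\<And>k. k \<in> I \<Longrightarrow> g k \<in> S"
  shows "(\<lambda>x. \<Sum>k\<in>I. c k * g k x) \<in> S"
  using g
proof (induction I rule: infinite_finite_induct)
  case (insert k I)
  then have "(\<lambda>x. (\<Sum>k\<in>I. c k * g k x) + c k * g k x) \<in> S"
    by (intro L2_closed_subspace_add_scaled[OF S]) simp_all
  with insert show ?case
    by (simp add: add.commute)
qed (use S in \<open>simp_all add: L2_closed_subspace_def\<close>)

lemma L2_closed_subspace_L2: "L2_closed_subspace M (L2 M)"
  by (auto simp: L2_closed_subspace_def L2_converges_to_def L2_zero L2_add L2_cmult)

lemma L2_on_converges_to_restrict: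
  assumes E: "E \<in> sets M" and s: "\<And>n. s n \<in> L2_on M E" and lim: "L2_converges_to M s l"
  shows "L2_converges_to M s (\<lambda>x. indicator E x * l x)" "(\<lambda>x. indicator E x * l x) \<in> L2_on M E"
proof -
  have l: "l \<in> L2 M"
    using lim by (simp add: L2_converges_to_def)
  show restrict: "(\<lambda>x. indicator E x * l x) \<in> L2_on M E"
    using L2_indicator_mult[OF l E] by (simp add: L2_on_def)
  \<comment> \<open>Since \<open>s n\<close> vanishes off \<open>E\<close>, cutting \<open>l\<close> down to \<open>E\<close> can only reduce the distance.\<close>
  have closer: "L2_norm M (\<lambda>x. s n x - indicator E x * l x) \<le> L2_norm M (\<lambda>x. s n x - l x)" for n
  proof -
    have "(s n x - indicator E x * l x)^2 \<le> (s n x - l x)^2" if "x \<in> space M" for x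
      using s[of n] that by (cases "x \<in> E") (auto simp: L2_on_def)
    then have "(\<integral>x. (s n x - indicator E x * l x)^2 \<partial>M) \<le> (\<integral>x. (s n x - l x)^2 \<partial>M)"
      using s[of n] restrict l
      by (intro integral_mono L2_sq_integrable L2_diff) (auto simp: L2_on_def)
    then show ?thesis
      by (simp add: L2_norm_def)
  qed
  have lim': "(\<lambda>n. L2_norm M (\<lambda>x. s n x - l x)) \<longlonglongrightarrow> 0"
    using lim by (simp add: L2_converges_to_def)
  have "(\<lambda>n. L2_norm M (\<lambda>x. s n x - indicator E x * l x)) \<longlonglongrightarrow> 0"
    by (rule tendsto_sandwich[OF _ _ tendsto_const lim']) (simp_all add: L2_norm_nonneg closer)
  then show "L2_converges_to M s (\<lambda>x. indicator E x * l x)"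
    using restrict by (simp add: L2_converges_to_def L2_on_def)
qed

lemma L2_closed_subspace_L2_on:
  assumes E: "E \<in> sets M"
  shows "L2_closed_subspace M (L2_on M E)"
  unfolding L2_closed_subspace_def
proof (intro conjI allI impI ballI)
  fix s l assume "(\<forall>n. s n \<in> L2_on M E) \<and> L2_converges_to M s l"
  then show "\<exists>l'\<in>L2_on M E. L2_converges_to M s l'"
    using L2_on_converges_to_restrict[OF E, of s l] by blast
next
  fix f g a assume "f \<in> L2_on M E" "g \<in> L2_on M E"
  then show "(\<lambda>x. f x + a * g x) \<in> L2_on M E"
    by (simp add: L2_on_def L2_add L2_cmult)
qed (simp_all add: L2_on_def L2_zero subset_iff)

lemma bessel_seq_series_in_subspace:
  assumes S: "L2_closed_subspace M S" and g: "bessel_seq M g B" "\<And>k. g k \<in> S"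
    and c: "summable (\<lambda>k. (c k)^2)"
  obtains h where "h \<in> S" "L2_series_conv M c g h"
proof -
  obtain h where "L2_series_conv M c g h"
    using g(1) c by (rule bessel_seq_series_converges)
  then have conv: "L2_converges_to M (\<lambda>n x. \<Sum>k<n. c k * g k x) h"
    by (simp add: L2_series_conv_iff)
  obtain h' where "h' \<in> S" "L2_converges_to M (\<lambda>n x. \<Sum>k<n. c k * g k x) h'"
    by (rule L2_closed_subspace_limit[OF S _ conv]) (use S g(2) in \<open>rule L2_closed_subspace_sum\<close>)
  then show ?thesis
    by (intro that) (simp_all add: L2_series_conv_iff)
qed

lemma L2_closed_subspace_Cauchy_limit:
  assumes S: "L2_closed_subspace M S" and s: "\<And>n. s n \<in> S" and Cauchy: "L2_Cauchy M s"
  obtains l where "l \<in> S" "L2_converges_to M s l"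
proof -
  have "s n \<in> L2 M" for n
    using S s by (auto simp: L2_closed_subspace_def)
  then obtain l where "L2_converges_to M s l"
    using L2_complete[OF _ Cauchy] by blast
  then show ?thesis
    using L2_closed_subspace_limit[where s=s, OF S s] that by blast
qed

section \<open>A compactness criterion for series operators\<close>

lemma bounded_coordinates_convergent_subseq:
  fixes a :: "nat \<Rightarrow> nat \<Rightarrow> real"
  assumes "\<And>n k. \<bar>a n k\<bar> \<le> \<gamma> k"
  obtains r where "strict_mono r" "\<And>k. convergent (\<lambda>n. a (r n) k)"
proof -
  define K where "K = PiE UNIV (\<lambda>k. {-\<gamma> k..\<gamma> k})"
  have "compactin (product_topology (\<lambda>_. euclidean) UNIV) K"
    unfolding K_def compactin_PiE by simp
  then have "compact K"
    by (simp add: euclidean_product_topology)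
  moreover have "a n \<in> K" for n
    using assms by (simp add: K_def PiE_iff abs_le_iff minus_le_iff)
  ultimately obtain l r where r: "strict_mono r" and lim: "(a \<circ> r) \<longlonglongrightarrow> l"
    using compact_imp_seq_compact seq_compactE by metis
  have "(\<lambda>n. a (r n) k) \<longlonglongrightarrow> l k" for k
  proof -
    have "isCont (\<lambda>x. x k) l"
      using continuous_on_product_coordinates[of k] continuous_on_eq_continuous_at[OF open_UNIV]
      by blast
    from isCont_tendsto_compose[OF this lim] show ?thesis
      by (simp add: o_def)
  qed
  with r show ?thesis
    by (intro that) (auto simp: convergent_def)
qed

lemma L2_Cauchy_by_coordinates:
  fixes a :: "nat \<Rightarrow> nat \<Rightarrow> real"
  assumes conv: "\<And>k. convergent (\<lambda>n. a n k)"
    and bound: "\<And>m n N. (L2_norm M (\<lambda>x. S m x - S n x))^2 \<le> \<alpha> * (\<Sum>k<N. (a m k - a n k)^2) + \<delta> N"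
    and \<delta>: "\<delta> \<longlonglongrightarrow> 0"
  shows "L2_Cauchy M S"
  unfolding L2_Cauchy_def
proof (intro allI impI)
  fix e :: real assume "0 < e"
  then obtain N where "\<forall>n\<ge>N. norm (\<delta> n - 0) < e^2 / 2"
    using LIMSEQ_D[OF \<delta>, of "e^2 / 2"] by auto
  then have N: "\<delta> N < e^2 / 2"
    by auto
  have coord: "((\<lambda>p. a (f p) k) \<longlongrightarrow> lim (\<lambda>n. a n k)) (sequentially \<times>\<^sub>F sequentially)"
    if "filterlim f sequentially (sequentially \<times>\<^sub>F sequentially)" for f :: "nat \<times> nat \<Rightarrow> nat" and k
    using filterlim_compose[OF conv[of k, unfolded convergent_LIMSEQ_iff] that] by simp
  have "((\<lambda>p. \<alpha> * (\<Sum>k<N. (a (fst p) k - a (snd p) k)^2))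
      \<longlongrightarrow> \<alpha> * (\<Sum>k<N. (lim (\<lambda>n. a n k) - lim (\<lambda>n. a n k))^2)) (sequentially \<times>\<^sub>F sequentially)"
    by (intro tendsto_intros coord filterlim_fst filterlim_snd)
  then have "eventually (\<lambda>p. \<alpha> * (\<Sum>k<N. (a (fst p) k - a (snd p) k)^2) < e^2 / 2)
      (sequentially \<times>\<^sub>F sequentially)"
    by (rule order_tendstoD(2)) (use \<open>0 < e\<close> in simp)
  then obtain N' where N': "\<And>m n. N' \<le> m \<Longrightarrow> N' \<le> n \<Longrightarrow> \<alpha> * (\<Sum>k<N. (a m k - a n k)^2) < e^2 / 2"
    unfolding eventually_prod_sequentially by auto
  have "L2_norm M (\<lambda>x. S m x - S n x) < e" if "N' \<le> m" "N' \<le> n" for m n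
  proof -
    have "(L2_norm M (\<lambda>x. S m x - S n x))^2 < e^2"
      using bound[of m n N] N N'[OF that] by linarith
    then show ?thesis
      using \<open>0 < e\<close> by (simp add: power_less_imp_less_base)
  qed
  then show "\<exists>N. \<forall>m\<ge>N. \<forall>n\<ge>N. L2_norm M (\<lambda>x. S m x - S n x) < e"
    by blast
qed

lemma series_op_diff_sq_norm_le:
  assumes D: "L2_closed_subspace M D" and e: "\<And>k. e k \<in> L2 M" and g: "bessel_seq M g B"
    and tail: "\<And>f N n. f \<in> D \<Longrightarrow>
      (L2_norm M (\<lambda>x. \<Sum>k\<in>{N..<n}. L2_inner M f (e k) * g k x))^2 \<le> \<beta> N * (L2_norm M f)^2"
    and f: "f \<in> D" "L2_norm M f \<le> R" "L2_series_conv M (\<lambda>k. L2_inner M f (e k)) g Tf"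
    and h: "h \<in> D" "L2_norm M h \<le> R" "L2_series_conv M (\<lambda>k. L2_inner M h (e k)) g Th"
  shows "(L2_norm M (\<lambda>x. Tf x - Th x))^2
    \<le> 2 * B * (\<Sum>k<N. (L2_inner M f (e k) - L2_inner M h (e k))^2) + 2 * (\<bar>\<beta> N\<bar> * (2 * R)^2)"
proof -
  define H where "H = (\<lambda>x. f x - h x)"
  have fh: "f \<in> L2 M" "h \<in> L2 M"
    using D f(1) h(1) by (auto simp: L2_closed_subspace_def)
  have H: "H \<in> D"
    unfolding H_def by (rule L2_closed_subspace_diff[OF D f(1) h(1)])
  have coeff_H: "L2_inner M H (e k) = L2_inner M f (e k) - L2_inner M h (e k)" for k
    unfolding H_def by (rule L2_inner_diff[OF fh e])
  have "L2_series_conv M (\<lambda>k. L2_inner M H (e k)) g (\<lambda>x. Tf x - Th x)"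
    unfolding coeff_H using g f(3) h(3) by (intro L2_series_conv_diff) (auto simp: bessel_seq_def)
  moreover have "(L2_norm M (\<lambda>x. \<Sum>k\<in>{N..<n}. L2_inner M H (e k) * g k x))^2 \<le> \<bar>\<beta> N\<bar> * (2 * R)^2"
    for n
  proof -
    have "L2_norm M H \<le> 2 * R"
      using L2_norm_diff_le[OF fh] f(2) h(2) by (simp add: H_def)
    have "\<beta> N * (L2_norm M H)^2 \<le> \<bar>\<beta> N\<bar> * (L2_norm M H)^2"
      by (intro mult_right_mono) simp_all
    also have "\<dots> \<le> \<bar>\<beta> N\<bar> * (2 * R)^2"
      by (intro mult_left_mono power_mono L2_norm_nonneg \<open>L2_norm M H \<le> 2 * R\<close>) simp
    finally show ?thesis
      using tail[OF H, of N n] by linarith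
  qed
  ultimately have "(L2_norm M (\<lambda>x. Tf x - Th x))^2
      \<le> 2 * B * (\<Sum>k<N. (L2_inner M H (e k))^2) + 2 * (\<bar>\<beta> N\<bar> * (2 * R)^2)"
    by (rule L2_series_conv_sq_norm_le[OF g])
  then show ?thesis
    by (simp only: coeff_H)
qed

lemma compact_series_opI:
  assumes D: "L2_closed_subspace M D" and Tgt: "L2_closed_subspace M Tgt"
    and e: "\<And>k. e k \<in> L2 M"
    and g: "bessel_seq M g B" "\<And>k. g k \<in> Tgt"
    and coeffs: "\<And>f. f \<in> D \<Longrightarrow> summable (\<lambda>k. (L2_inner M f (e k))^2)"
    and tail: "\<And>f N n. f \<in> D \<Longrightarrow>
      (L2_norm M (\<lambda>x. \<Sum>k\<in>{N..<n}. L2_inner M f (e k) * g k x))^2 \<le> \<beta> N * (L2_norm M f)^2"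
    and \<beta>: "\<beta> \<longlonglongrightarrow> 0"
  shows "compact_series_op M D Tgt (\<lambda>f k. L2_inner M f (e k)) g"
proof -
  have "\<exists>h. h \<in> Tgt \<and> L2_series_conv M (\<lambda>k. L2_inner M f (e k)) g h" if "f \<in> D" for f
    using bessel_seq_series_in_subspace[OF Tgt g coeffs[OF that]] by blast
  then obtain T where T: "\<And>f. f \<in> D \<Longrightarrow> T f \<in> Tgt"
    and T_conv: "\<And>f. f \<in> D \<Longrightarrow> L2_series_conv M (\<lambda>k. L2_inner M f (e k)) g (T f)"
    by metis
  have seq_compact:
    "\<exists>r l. strict_mono r \<and> l \<in> Tgt \<and> (\<lambda>n. L2_norm M (\<lambda>x. T (F (r n)) x - l x)) \<longlonglongrightarrow> 0"
    if F: "\<forall>n. F n \<in> D \<and> L2_norm M (F n) \<le> R" for F :: "nat \<Rightarrow> 'a \<Rightarrow> real" and R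
  proof -
    have FD: "F n \<in> D" and FR: "L2_norm M (F n) \<le> R" for n
      using F by auto
    have bounded: "\<bar>L2_inner M (F n) (e k)\<bar> \<le> L2_norm M (e k) * R" for n k
      using FD[of n] D L2_inner_abs_le[OF _ e, of "F n" k]
        mult_right_mono[OF FR[of n] L2_norm_nonneg[of M "e k"]]
      by (auto simp: L2_closed_subspace_def mult.commute)
    \<comment> \<open>Extract a subsequence along which every coefficient converges; then the heads of the
      series converge and their tails are uniformly small.\<close>
    obtain r where r: "strict_mono r" and conv: "\<And>k. convergent (\<lambda>n. L2_inner M (F (r n)) (e k))"
      using bounded_coordinates_convergent_subseq[of "\<lambda>n k. L2_inner M (F n) (e k)", OF bounded]
      by blast
    have bound: "(L2_norm M (\<lambda>x. T (F (r m)) x - T (F (r n)) x))^2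
      \<le> 2 * B * (\<Sum>k<N. (L2_inner M (F (r m)) (e k) - L2_inner M (F (r n)) (e k))^2)
        + 2 * (\<bar>\<beta> N\<bar> * (2 * R)^2)" for m n N
      by (rule series_op_diff_sq_norm_le[OF D e g(1) tail FD FR T_conv[OF FD] FD FR T_conv[OF FD]])
    have "(\<lambda>N. 2 * (\<bar>\<beta> N\<bar> * (2 * R)^2)) \<longlonglongrightarrow> 2 * (\<bar>0\<bar> * (2 * R)^2)"
      by (intro tendsto_intros \<beta>)
    then have "L2_Cauchy M (\<lambda>n. T (F (r n)))"
      by (intro L2_Cauchy_by_coordinates[OF conv bound]) simp
    then obtain l where "l \<in> Tgt" "L2_converges_to M (\<lambda>n. T (F (r n))) l"
      using L2_closed_subspace_Cauchy_limit[OF Tgt T[OF FD]] by blast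
    then show ?thesis
      using r by (auto simp: L2_converges_to_def)
  qed
  show ?thesis
    unfolding compact_series_op_def
  proof (intro exI[of _ T] conjI ballI allI impI)
    fix f assume "f \<in> D"
    then show "T f \<in> Tgt" "L2_series_conv M (\<lambda>k. L2_inner M f (e k)) g (T f)"
      by (simp_all add: T T_conv)
  next
    fix F :: "nat \<Rightarrow> 'a \<Rightarrow> real" and R
    assume "\<forall>n. F n \<in> D \<and> L2_norm M (F n) \<le> R"
    then show "\<exists>r l. strict_mono r \<and> l \<in> Tgt \<and> (\<lambda>n. L2_norm M (\<lambda>x. T (F (r n)) x - l x)) \<longlonglongrightarrow> 0"
      by (rule seq_compact)
  qed
qed

section \<open>Hilbert-Schmidt families\<close>

lemma L2_synthesis_sq_le:
  assumes w: "\<And>k. k \<in> I \<Longrightarrow> w k \<in> L2 M"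
  shows "(L2_norm M (\<lambda>x. \<Sum>k\<in>I. d k * w k x))^2 \<le> (\<Sum>k\<in>I. (d k)^2) * (\<Sum>k\<in>I. (L2_norm M (w k))^2)"
proof -
  have "(L2_norm M (\<lambda>x. \<Sum>k\<in>I. d k * w k x))^2 = (\<integral>x. (\<Sum>k\<in>I. d k * w k x)^2 \<partial>M)"
    by (rule L2_norm_sq)
  also have "\<dots> \<le> (\<integral>x. (\<Sum>k\<in>I. (d k)^2) * (\<Sum>k\<in>I. (w k x)^2) \<partial>M)"
  proof (rule integral_mono)
    show "integrable M (\<lambda>x. (\<Sum>k\<in>I. d k * w k x)^2)"
      using w by (simp add: L2_sq_integrable L2_sum L2_cmult)
    show "integrable M (\<lambda>x. (\<Sum>k\<in>I. (d k)^2) * (\<Sum>k\<in>I. (w k x)^2))"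
      using w by (simp add: L2_sq_integrable)
  qed (rule Cauchy_Schwarz_ineq_sum)
  also have "\<dots> = (\<Sum>k\<in>I. (d k)^2) * (\<Sum>k\<in>I. (L2_norm M (w k))^2)"
    using w by (simp add: L2_norm_sq L2_sq_integrable)
  finally show ?thesis .
qed

lemma bessel_seq_of_summable_norms:
  assumes w: "\<And>k. w k \<in> L2 M" and summable: "summable (\<lambda>k. (L2_norm M (w k))^2)"
  shows "bessel_seq M w (\<Sum>k. (L2_norm M (w k))^2)"
  unfolding bessel_seq_def
proof (intro conjI allI ballI)
  fix f assume f: "f \<in> L2 M"
  have le: "(L2_inner M f (w k))^2 \<le> (L2_norm M f)^2 * (L2_norm M (w k))^2" for k
    using f w by (rule L2_inner_sq_le)
  show sf: "summable (\<lambda>k. (L2_inner M f (w k))^2)"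
    using le by (intro summable_comparison_test'[OF summable_mult[OF summable]]) auto
  show "(\<Sum>k. (L2_inner M f (w k))^2) \<le> (\<Sum>k. (L2_norm M (w k))^2) * (L2_norm M f)^2"
    using suminf_le[OF le sf summable_mult[OF summable]] suminf_mult[OF summable]
    by (simp add: mult.commute)
qed (use w summable in \<open>auto intro: suminf_nonneg\<close>)

lemma compact_series_op_hilbert_schmidt_analysis:
  assumes D: "L2_closed_subspace M D" and Tgt: "L2_closed_subspace M Tgt"
    and e: "\<And>k. e k \<in> L2 M"
    and w: "\<And>k. w k \<in> L2 M" "summable (\<lambda>k. (L2_norm M (w k))^2)"
    and e_w: "\<And>f k. f \<in> D \<Longrightarrow> L2_inner M f (e k) = L2_inner M f (w k)"
    and g: "bessel_seq M g B" "\<And>k. g k \<in> Tgt"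
  shows "compact_series_op M D Tgt (\<lambda>f k. L2_inner M f (e k)) g"
proof (rule compact_series_opI[OF D Tgt e g])
  define \<rho> where "\<rho> N = (\<Sum>k. (L2_norm M (w (k + N)))^2)" for N
  have DL2: "f \<in> D \<Longrightarrow> f \<in> L2 M" for f
    using D by (auto simp: L2_closed_subspace_def)
  show "summable (\<lambda>k. (L2_inner M f (e k))^2)" if "f \<in> D" for f
    using bessel_seq_of_summable_norms[OF w] DL2[OF that] by (simp add: e_w[OF that] bessel_seq_def)
  show "(L2_norm M (\<lambda>x. \<Sum>k\<in>{N..<n}. L2_inner M f (e k) * g k x))^2 \<le> (B * \<rho> N) * (L2_norm M f)^2"
    if "f \<in> D" for f N n
  proof -
    have "(L2_norm M (\<lambda>x. \<Sum>k\<in>{N..<n}. L2_inner M f (e k) * g k x))^2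
        \<le> B * (\<Sum>k\<in>{N..<n}. (L2_inner M f (w k))^2)"
      using bessel_seq_synthesis_le[OF g(1)] by (simp add: e_w[OF that])
    also have "\<dots> \<le> B * (\<Sum>k\<in>{N..<n}. (L2_norm M f)^2 * (L2_norm M (w k))^2)"
      using g(1) DL2[OF that] w(1)
      by (intro mult_left_mono sum_mono L2_inner_sq_le) (auto simp: bessel_seq_def)
    also have "\<dots> = B * ((L2_norm M f)^2 * (\<Sum>k\<in>{N..<n}. (L2_norm M (w k))^2))"
      by (simp add: sum_distrib_left)
    also have "\<dots> \<le> B * ((L2_norm M f)^2 * \<rho> N)"
      using g(1) w(2) unfolding \<rho>_def
      by (intro mult_left_mono sum_atLeastLessThan_le_suminf_shift) (auto simp: bessel_seq_def)
    finally show ?thesis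
      by (simp add: ac_simps)
  qed
  have "\<rho> \<longlonglongrightarrow> 0"
    unfolding \<rho>_def using w(2) by (rule suminf_exist_split2)
  then show "(\<lambda>N. B * \<rho> N) \<longlonglongrightarrow> 0"
    by (auto intro: tendsto_mult_right_zero)
qed

lemma compact_series_op_hilbert_schmidt_synthesis:
  assumes Tgt: "L2_closed_subspace M Tgt"
    and e: "bessel_seq M e B"
    and w: "\<And>k. w k \<in> Tgt" "summable (\<lambda>k. (L2_norm M (w k))^2)"
  shows "compact_series_op M (L2 M) Tgt (\<lambda>f k. L2_inner M f (e k)) w"
proof -
  define \<rho> where "\<rho> N = (\<Sum>k. (L2_norm M (w (k + N)))^2)" for N
  have wL2: "w k \<in> L2 M" for k
    using Tgt w(1) by (auto simp: L2_closed_subspace_def)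
  show ?thesis
  proof (rule compact_series_opI[OF L2_closed_subspace_L2 Tgt _
        bessel_seq_of_summable_norms[OF wL2 w(2)] w(1)])
    show "e k \<in> L2 M" for k
      using e by (simp add: bessel_seq_def)
    show "summable (\<lambda>k. (L2_inner M f (e k))^2)" if "f \<in> L2 M" for f
      using e that by (simp add: bessel_seq_def)
    show "(L2_norm M (\<lambda>x. \<Sum>k\<in>{N..<n}. L2_inner M f (e k) * w k x))^2 \<le> (B * \<rho> N) * (L2_norm M f)^2"
      if f: "f \<in> L2 M" for f N n
    proof -
      have "(L2_norm M (\<lambda>x. \<Sum>k\<in>{N..<n}. L2_inner M f (e k) * w k x))^2
          \<le> (\<Sum>k\<in>{N..<n}. (L2_inner M f (e k))^2) * (\<Sum>k\<in>{N..<n}. (L2_norm M (w k))^2)"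
        using wL2 by (rule L2_synthesis_sq_le)
      also have "\<dots> \<le> (B * (L2_norm M f)^2) * \<rho> N"
      proof (rule mult_mono)
        have "summable (\<lambda>k. (L2_inner M f (e k))^2)"
          and bessel: "(\<Sum>k. (L2_inner M f (e k))^2) \<le> B * (L2_norm M f)^2"
          using e f by (simp_all add: bessel_seq_def)
        then have "(\<Sum>k\<in>{N..<n}. (L2_inner M f (e k))^2) \<le> (\<Sum>k. (L2_inner M f (e k))^2)"
          by (intro sum_le_suminf) simp_all
        then show "(\<Sum>k\<in>{N..<n}. (L2_inner M f (e k))^2) \<le> B * (L2_norm M f)^2"
          using bessel by linarith
        show "(\<Sum>k\<in>{N..<n}. (L2_norm M (w k))^2) \<le> \<rho> N"
          unfolding \<rho>_def using w(2) by (rule sum_atLeastLessThan_le_suminf_shift) simp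
      qed (use e in \<open>auto simp: bessel_seq_def intro: sum_nonneg\<close>)
      finally show ?thesis
        by (simp add: ac_simps)
    qed
    have "\<rho> \<longlonglongrightarrow> 0"
      unfolding \<rho>_def using w(2) by (rule suminf_exist_split2)
    then show "(\<lambda>N. B * \<rho> N) \<longlonglongrightarrow> 0"
      by (auto intro: tendsto_mult_right_zero)
  qed
qed

section \<open>Restriction to \<open>E\<close>\<close>

lemma summable_L2_norm_indicator_mult:
  assumes E: "E \<in> sets M" "emeasure M E < \<infinity>" and v: "\<And>k. v k \<in> L2 M"
    and v_sq: "\<And>x. x \<in> E \<Longrightarrow> summable (\<lambda>k. (v k x)^2) \<and> (\<Sum>k. (v k x)^2) \<le> C^2"
  shows "summable (\<lambda>k. (L2_norm M (\<lambda>x. indicator E x * v k x))^2)"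
proof (rule summableI_nonneg_bounded)
  fix n
  have w: "(\<lambda>x. indicator E x * v k x) \<in> L2 M" for k
    using v E(1) by (rule L2_indicator_mult)
  have ind: "integrable M (\<lambda>x. C^2 * indicator E x :: real)"
    using E by (intro integrable_mult_right) (simp add: integrable_indicator_iff top.not_eq_extremum)
  have "(\<Sum>k<n. (L2_norm M (\<lambda>x. indicator E x * v k x))^2)
      = (\<integral>x. (\<Sum>k<n. (indicator E x * v k x)^2) \<partial>M)"
    using w by (simp add: L2_norm_sq L2_sq_integrable)
  also have "\<dots> \<le> (\<integral>x. C^2 * indicator E x \<partial>M)"
  proof (rule integral_mono[OF _ ind])
    show "integrable M (\<lambda>x. \<Sum>k<n. (indicator E x * v k x)^2)"
      using w by (simp add: L2_sq_integrable)
    show "(\<Sum>k<n. (indicator E x * v k x)^2) \<le> C^2 * indicator E x" for x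
    proof (cases "x \<in> E")
      case True
      then have "(\<Sum>k<n. (v k x)^2) \<le> (\<Sum>k. (v k x)^2)"
        using v_sq by (intro sum_le_suminf) auto
      with True show ?thesis
        using v_sq by fastforce
    qed simp
  qed
  also have "\<dots> = C^2 * measure M E"
    using E by simp
  finally show "(\<Sum>k<n. (L2_norm M (\<lambda>x. indicator E x * v k x))^2) \<le> C^2 * measure M E" .
qed simp

lemma L2_inner_L2_on_indicator:
  "f \<in> L2_on M E \<Longrightarrow> L2_inner M f g = L2_inner M f (\<lambda>x. indicator E x * g x)"
  unfolding L2_inner_def by (rule Bochner_Integration.integral_cong) (auto simp: L2_on_def indicator_def)

theorem lemma2p3:
  fixes M :: "'a measure" and E :: "'a set" and C :: real
    and v u :: "nat \<Rightarrow> 'a \<Rightarrow> real"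
  assumes E: "E \<in> sets M" "0 < emeasure M E" "emeasure M E < \<infinity>"
    and v: "\<And>k. v k \<in> L2 M"
    and vbd: "\<And>x. x \<in> E \<Longrightarrow> summable (\<lambda>k. (v k x)^2) \<and> (\<Sum>k. (v k x)^2) \<le> C^2"
    and u: "is_frame M u"
  shows "compact_series_op M (L2_on M E) (L2 M) (\<lambda>f k. L2_inner M f (v k)) u
    \<and> compact_series_op M (L2 M) (L2_on M E) (\<lambda>f k. L2_inner M f (u k))
           (\<lambda>k x. indicator E x * v k x)
    \<and> compact_series_op M (L2_on M E) (L2_on M E) (\<lambda>f k. L2_inner M f (v k))
           (\<lambda>k x. indicator E x * v k x)"
proof -
  obtain B where u_bessel: "bessel_seq M u B"
    using u by (rule is_frame_imp_bessel_seq)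
  define w where "w = (\<lambda>k x. indicator E x * v k x)"
  have w_L2: "w k \<in> L2 M" for k
    unfolding w_def using v E(1) by (rule L2_indicator_mult)
  have w_on: "w k \<in> L2_on M E" for k
    using w_L2 by (simp add: L2_on_def w_def)
  have w_hs: "summable (\<lambda>k. (L2_norm M (w k))^2)"
    unfolding w_def using E(1,3) v vbd by (rule summable_L2_norm_indicator_mult)
  have v_w: "L2_inner M f (v k) = L2_inner M f (w k)" if "f \<in> L2_on M E" for f k
    unfolding w_def using that by (rule L2_inner_L2_on_indicator)
  have u_L2: "u k \<in> L2 M" for k
    using u_bessel by (simp add: bessel_seq_def)
  note L2 = L2_closed_subspace_L2[of M] and L2_on = L2_closed_subspace_L2_on[OF E(1)]
  have "compact_series_op M (L2_on M E) (L2 M) (\<lambda>f k. L2_inner M f (v k)) u"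
    by (rule compact_series_op_hilbert_schmidt_analysis[OF L2_on L2 v w_L2 w_hs v_w u_bessel u_L2])
  moreover have "compact_series_op M (L2 M) (L2_on M E) (\<lambda>f k. L2_inner M f (u k)) w"
    by (rule compact_series_op_hilbert_schmidt_synthesis[OF L2_on u_bessel w_on w_hs])
  moreover have "compact_series_op M (L2_on M E) (L2_on M E) (\<lambda>f k. L2_inner M f (v k)) w"
    by (rule compact_series_op_hilbert_schmidt_analysis[OF L2_on L2_on v w_L2 w_hs v_w
          bessel_seq_of_summable_norms[OF w_L2 w_hs] w_on])
  ultimately show ?thesis
    unfolding w_def by blast
qed

end
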